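(* Let $n\ge 1$ and for $x\in\mathbb{R}^n$ define $\Phi_n(x)=\mathbb{E}_{\ell\sim\mathcal{S}^{n-1}}\left[e^{\langle \ell, x\rangle}\right]$, where $\ell$ is uniformly distributed on the Euclidean unit sphere $\mathcal{S}^{n-1}=\{x\in\mathbb{R}^n:\|x\|=1\}$. Then for any $X\in\mathbb{R}^n$, any $\lambda\in\mathbb{R}$ and any $\varepsilon\in(0,1)$, $$\Phi_n(\lambda X)\ge (1-\varepsilon^2)^{n/2}\, e^{\varepsilon\|\lambda X\|}.$$
   Context: $\|\cdot\|$ is the Euclidean norm. For $n=1$, $\mathcal{S}^0=\{-1,1\}$ with the uniform distribution. $\Phi_n$ is called the energy function of the averaged moment generating function. *)

theory Defs
  imports "HOL-Analysis.Analysis"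
begin

text \<open>Uniform (normalized surface) probability measure on the unit sphere of
  a Euclidean space, defined as the cone measure: the image of the uniform
  distribution on the open unit ball under radial projection y \<mapsto> y / |y|.
  For dimension 1 this is the uniform distribution on {-1, 1}.\<close>
definition sphere_uniform :: "'a::euclidean_space measure" where
  "sphere_uniform = distr (uniform_measure lborel (ball 0 1)) borel (\<lambda>y. y /\<^sub>R norm y)"

definition Phi :: "'a::euclidean_space \<Rightarrow> real" where
  "Phi x = (\<integral>l. exp (l \<bullet> x) \<partial>(sphere_uniform :: 'a measure))"

end

theory Submission
  imports Defs "HOL-Probability.Probability"
begin

text \<open>
  Write a standard Gaussian vector \<open>y\<close> as \<open>norm y\<close> times \<open>sgn y\<close>: the direction is uniform on the
  sphere and independent of the radius, so the moments factor,
  E (l \<bullet> v)^(2m) * P_m = \<integral> (y \<bullet> v)^(2m) \<gamma>(y) dy = (2\<pi>)^(n/2) |v|^(2m) (2m)! / (2^m m!)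
  with P_m = \<integral> |y|^(2m) \<gamma>(y) dy. By the symmetry of the sphere,
  \<Phi>(v) = E cosh (l \<bullet> v) = \<Sum>_m E (l \<bullet> v)^(2m) / (2m)!, while
  \<Sum>_m (\<epsilon>^2/2)^m P_m / m! = \<integral> exp (\<epsilon>^2 |y|^2 / 2) \<gamma>(y) dy = (2\<pi>)^(n/2) (1 - \<epsilon>^2)^(-n/2).
  The termwise products of these two series are the squares (2\<pi>)^(n/2) ((\<epsilon> |v| / 2)^m / m!)^2,
  so Cauchy--Schwarz for series gives (2\<pi>)^(n/2) exp (\<epsilon> |v|) \<le> \<Phi>(v) (2\<pi>)^(n/2) (1 - \<epsilon>^2)^(-n/2).
\<close>

section \<open>The uniform measure on the sphere\<close>

declare open_ball[THEN borel_open, measurable]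

lemma nn_integral_lborel_scaleR:
  fixes f :: "'a::euclidean_space \<Rightarrow> ennreal"
  assumes [measurable]: "f \<in> borel_measurable borel" and "c \<noteq> 0"
  shows "(\<integral>\<^sup>+x. f x \<partial>lborel) = ennreal (\<bar>c\<bar> ^ DIM('a)) * (\<integral>\<^sup>+x. f (c *\<^sub>R x) \<partial>lborel)"
  by (subst lborel_affine[OF \<open>c \<noteq> 0\<close>, of 0])
     (simp add: nn_integral_density nn_integral_distr nn_integral_cmult)

lemma nn_integral_lborel_translate:
  fixes f :: "'a::euclidean_space \<Rightarrow> ennreal"
  assumes [measurable]: "f \<in> borel_measurable borel"
  shows "(\<integral>\<^sup>+x. f (t + x) \<partial>lborel) = (\<integral>\<^sup>+x. f x \<partial>lborel)"
  by (subst lborel_distr_plus[of t, symmetric]) (simp add: nn_integral_distr)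

lemma sphere_uniform_eq_distr_sgn:
  "sphere_uniform = distr (uniform_measure lborel (ball 0 1)) borel sgn"
  by (simp add: sphere_uniform_def sgn_div_norm[abs_def])

lemma sets_sphere_uniform [simp, measurable_cong]: "sets sphere_uniform = sets borel"
  by (simp add: sphere_uniform_def)

lemma emeasure_unit_ball_pos: "emeasure lborel (ball (0::'a::euclidean_space) 1) \<noteq> 0"
proof -
  have "unit_ball_vol (real DIM('a)) > 0"
    by (rule unit_ball_vol_pos) simp
  then show ?thesis
    by (simp add: emeasure_ball del: unit_ball_vol_pos)
qed

lemma emeasure_unit_ball_finite: "emeasure lborel (ball (0::'a::euclidean_space) 1) \<noteq> \<infinity>"
  by (simp add: emeasure_ball)

lemma prob_space_sphere_uniform: "prob_space (sphere_uniform :: 'a::euclidean_space measure)"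
  unfolding sphere_uniform_eq_distr_sgn
  using emeasure_unit_ball_pos[where 'a='a] emeasure_unit_ball_finite[where 'a='a]
  by (intro prob_space.prob_space_distr prob_space_uniform_measure) auto

lemma AE_sphere_uniform_norm_le: "AE l in (sphere_uniform :: 'a::euclidean_space measure). norm l \<le> 1"
  unfolding sphere_uniform_eq_distr_sgn by (simp add: AE_distr_iff norm_sgn)

lemma nn_integral_sphere_uniform:
  fixes f :: "'a::euclidean_space \<Rightarrow> ennreal"
  assumes [measurable]: "f \<in> borel_measurable borel"
  shows "(\<integral>\<^sup>+l. f l \<partial>sphere_uniform) =
    (\<integral>\<^sup>+y. f (sgn y) * indicator (ball 0 1) y \<partial>lborel) / emeasure lborel (ball (0::'a) 1)"
  unfolding sphere_uniform_eq_distr_sgn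
  by (simp add: nn_integral_distr nn_integral_uniform_measure)

lemma distr_uminus_sphere_uniform:
  "distr sphere_uniform borel uminus = (sphere_uniform :: 'a::euclidean_space measure)"
proof (rule measure_eqI)
  fix A :: "'a set"
  assume "A \<in> sets (distr sphere_uniform borel uminus)"
  then have [measurable]: "A \<in> sets borel"
    by simp
  have "(\<integral>\<^sup>+y. indicator A (sgn y) * indicator (ball 0 1) y \<partial>lborel) =
      (\<integral>\<^sup>+y. indicator A (sgn (- y)) * indicator (ball 0 1) (- y) \<partial>(lborel :: 'a measure))"
    by (rule nn_integral_lborel_scaleR[of _ "-1", simplified]) auto
  also have "\<dots> = (\<integral>\<^sup>+y. indicator A (- sgn y) * indicator (ball 0 1) y \<partial>lborel)"
    by (simp add: sgn_minus indicator_def)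
  finally have "(\<integral>\<^sup>+l. indicator A (- l) \<partial>sphere_uniform) = (\<integral>\<^sup>+l. indicator A l \<partial>sphere_uniform)"
    using nn_integral_sphere_uniform[of "\<lambda>l. indicator A (- l)"] nn_integral_sphere_uniform[of "indicator A"]
    by simp
  then show "emeasure (distr sphere_uniform borel uminus) A = emeasure sphere_uniform A"
    by (simp add: nn_integral_distr flip: nn_integral_indicator)
qed simp

section \<open>Polar coordinates\<close>

lemma nn_integral_sgn_ball:
  fixes h :: "'a::euclidean_space \<Rightarrow> ennreal"
  assumes [measurable]: "h \<in> borel_measurable borel"
  shows "(\<integral>\<^sup>+y. h (sgn y) * indicator (ball 0 r) y \<partial>lborel) =
    (\<integral>\<^sup>+l. h l \<partial>sphere_uniform) * emeasure lborel (ball (0::'a) r)"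
proof (cases "r > 0")
  case True
  have "(\<integral>\<^sup>+y. h (sgn y) * indicator (ball 0 r) y \<partial>lborel) =
      ennreal (r ^ DIM('a)) * (\<integral>\<^sup>+y. h (sgn (r *\<^sub>R y)) * indicator (ball 0 r) (r *\<^sub>R y) \<partial>lborel)"
    using True by (subst nn_integral_lborel_scaleR[of _ r]) auto
  also have "(\<lambda>y. h (sgn (r *\<^sub>R y)) * indicator (ball 0 r) (r *\<^sub>R y)) =
      (\<lambda>y::'a. h (sgn y) * indicator (ball 0 1) y)"
    using True by (auto simp: sgn_scaleR indicator_def fun_eq_iff)
  also have "(\<integral>\<^sup>+y. h (sgn y) * indicator (ball 0 1) y \<partial>lborel) =
      (\<integral>\<^sup>+l. h l \<partial>sphere_uniform) * emeasure lborel (ball (0::'a) 1)"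
    using emeasure_unit_ball_pos[where 'a='a] emeasure_unit_ball_finite[where 'a='a]
    by (simp add: nn_integral_sphere_uniform ennreal_divide_times ennreal_divide_self less_top)
  also have "ennreal (r ^ DIM('a)) * ((\<integral>\<^sup>+l. h l \<partial>sphere_uniform) * emeasure lborel (ball (0::'a) 1)) =
      (\<integral>\<^sup>+l. h l \<partial>sphere_uniform) * emeasure lborel (ball (0::'a) r)"
    using True by (simp add: emeasure_ball ennreal_mult' mult_ac)
  finally show ?thesis .
qed (simp add: ball_empty)

lemma distr_norm_density_sgn:
  fixes h :: "'a::euclidean_space \<Rightarrow> ennreal"
  assumes [measurable]: "h \<in> borel_measurable borel"
    and finite: "(\<integral>\<^sup>+l. h l \<partial>sphere_uniform) \<noteq> \<infinity>"
  shows "distr (density lborel (\<lambda>y. h (sgn y))) borel norm =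
    density (distr (lborel :: 'a measure) borel norm) (\<lambda>_. \<integral>\<^sup>+l. h l \<partial>sphere_uniform)"
    (is "?M = ?N")
proof (rule measure_eqI_generator_eq[where E="range lessThan" and \<Omega>=UNIV and A="\<lambda>i. {..<real i}"])
  have "norm -` {..<r} = ball (0::'a) r" for r
    by (auto simp: ball_def)
  then have emeasure_lessThan: "emeasure ?M {..<r} = (\<integral>\<^sup>+l. h l \<partial>sphere_uniform) * emeasure lborel (ball (0::'a) r)"
    "emeasure ?N {..<r} = (\<integral>\<^sup>+l. h l \<partial>sphere_uniform) * emeasure lborel (ball (0::'a) r)" for r
    by (simp_all add: emeasure_distr emeasure_density nn_integral_sgn_ball nn_integral_cmult_indicator)
  show "emeasure ?M X = emeasure ?N X" if "X \<in> range lessThan" for X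
    using that emeasure_lessThan by auto
  show "emeasure ?M {..<real i} \<noteq> \<infinity>" for i
    using finite emeasure_lborel_ball_finite[of "0::'a" "real i"]
    by (simp add: emeasure_lessThan ennreal_mult_eq_top_iff)
  show "sets ?M = sigma_sets UNIV (range lessThan)" "sets ?N = sigma_sets UNIV (range lessThan)"
    by (simp_all add: borel_Iio)
  show "Int_stable (range lessThan :: real set set)"
    by (auto simp: Int_stable_def) (metis greaterThan_Int_greaterThan rangeI)
qed (auto simp: reals_Archimedean2)

lemma nn_integral_polar_product:
  fixes h :: "'a::euclidean_space \<Rightarrow> ennreal" and k :: "real \<Rightarrow> ennreal"
  assumes [measurable]: "h \<in> borel_measurable borel" "k \<in> borel_measurable borel"
    and "(\<integral>\<^sup>+l. h l \<partial>sphere_uniform) \<noteq> \<infinity>"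
  shows "(\<integral>\<^sup>+y. h (sgn y) * k (norm y) \<partial>lborel) =
    (\<integral>\<^sup>+l. h l \<partial>sphere_uniform) * (\<integral>\<^sup>+y. k (norm y) \<partial>(lborel :: 'a measure))"
proof -
  have "(\<integral>\<^sup>+y. h (sgn y) * k (norm y) \<partial>lborel) =
      (\<integral>\<^sup>+r. k r \<partial>distr (density lborel (\<lambda>y. h (sgn y))) borel norm)"
    by (simp add: nn_integral_distr nn_integral_density mult.commute)
  also have "\<dots> = (\<integral>\<^sup>+l. h l \<partial>sphere_uniform) * (\<integral>\<^sup>+y. k (norm y) \<partial>(lborel :: 'a measure))"
    using assms by (simp add: distr_norm_density_sgn nn_integral_density nn_integral_distr nn_integral_cmult)
  finally show ?thesis .
qed

section \<open>Gaussian integrals\<close>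

definition gaussian :: "'a::real_normed_vector \<Rightarrow> real" where
  "gaussian y = exp (- (norm y)\<^sup>2 / 2)"

lemma gaussian_nonneg [simp]: "0 \<le> gaussian y"
  by (simp add: gaussian_def)

lemma gaussian_norm [simp]: "gaussian (norm y) = gaussian y"
  by (simp add: gaussian_def)

lemma borel_measurable_gaussian [measurable]:
  "(gaussian :: 'a::euclidean_space \<Rightarrow> real) \<in> borel_measurable borel"
  unfolding gaussian_def by measurable

lemma nn_integral_lborel_gaussian:
  "(\<integral>\<^sup>+y. gaussian y \<partial>(lborel :: 'a::euclidean_space measure)) = ennreal (sqrt (2 * pi) ^ DIM('a))"
proof -
  have "ennreal (gaussian y) = (\<Prod>b\<in>Basis. ennreal (gaussian (y \<bullet> b)))" for y :: 'a
  proof -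
    have "(norm y)\<^sup>2 = (\<Sum>b\<in>Basis. (y \<bullet> b)\<^sup>2)"
      unfolding power2_norm_eq_inner by (simp add: euclidean_inner[of y y] power2_eq_square)
    then have "- (norm y)\<^sup>2 / 2 = (\<Sum>b\<in>Basis. - (norm (y \<bullet> b))\<^sup>2 / 2)"
      by (simp add: sum_divide_distrib sum_negf)
    then show ?thesis
      by (simp add: gaussian_def exp_sum prod_ennreal)
  qed
  then have "(\<integral>\<^sup>+y. gaussian y \<partial>(lborel :: 'a measure)) =
      (\<Prod>b\<in>(Basis :: 'a set). \<integral>\<^sup>+x. gaussian (x :: real) \<partial>lborel)"
    using nn_integral_lborel_prod[where 'a='a, of "\<lambda>_ x. ennreal (gaussian x)"] by simp
  also have "(\<integral>\<^sup>+x. gaussian (x :: real) \<partial>lborel) = ennreal (sqrt (2 * pi))"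
  proof -
    have "ennreal (gaussian x) = ennreal (sqrt (2 * pi)) * ennreal (std_normal_density x)" for x
      by (simp add: gaussian_def std_normal_density_def flip: ennreal_mult)
    moreover have "(\<integral>\<^sup>+x. ennreal (std_normal_density x) \<partial>lborel) = 1"
      by (subst nn_integral_eq_integral) auto
    ultimately show ?thesis
      by (simp add: nn_integral_cmult)
  qed
  finally show ?thesis
    by (simp add: ennreal_power)
qed

lemma nn_integral_lborel_gaussian_scaled:
  assumes "0 < c"
  shows "(\<integral>\<^sup>+y. gaussian (sqrt c *\<^sub>R y) \<partial>(lborel :: 'a::euclidean_space measure)) =
    ennreal ((sqrt (2 * pi) / sqrt c) ^ DIM('a))"
  using assms
  by (subst nn_integral_lborel_scaleR[of _ "1 / sqrt c"])
     (simp_all add: nn_integral_lborel_gaussian power_divide flip: ennreal_mult)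

lemma nn_integral_lborel_exp_inner_gaussian:
  fixes x :: "'a::euclidean_space"
  shows "(\<integral>\<^sup>+y. ennreal (exp (y \<bullet> x) * gaussian y) \<partial>lborel) =
    ennreal (exp ((norm x)\<^sup>2 / 2) * sqrt (2 * pi) ^ DIM('a))"
proof -
  have "(\<integral>\<^sup>+y. ennreal (exp (y \<bullet> x) * gaussian y) \<partial>lborel) =
      (\<integral>\<^sup>+y. ennreal (exp ((x + y) \<bullet> x) * gaussian (x + y)) \<partial>lborel)"
    by (rule nn_integral_lborel_translate[symmetric]) simp
  also have "\<dots> = (\<integral>\<^sup>+y. ennreal (exp ((norm x)\<^sup>2 / 2) * gaussian y) \<partial>(lborel :: 'a measure))"
  proof (rule nn_integral_cong)
    fix y :: 'a
    have "(x + y) \<bullet> x + - (norm (x + y))\<^sup>2 / 2 = (norm x)\<^sup>2 / 2 + - (norm y)\<^sup>2 / 2"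
      unfolding power2_norm_eq_inner by (simp add: inner_add_left inner_add_right inner_commute field_simps)
    then show "ennreal (exp ((x + y) \<bullet> x) * gaussian (x + y)) = ennreal (exp ((norm x)\<^sup>2 / 2) * gaussian y)"
      unfolding gaussian_def exp_add[symmetric] by simp
  qed
  also have "\<dots> = ennreal (exp ((norm x)\<^sup>2 / 2) * sqrt (2 * pi) ^ DIM('a))"
    by (simp add: ennreal_mult nn_integral_cmult nn_integral_lborel_gaussian)
  finally show ?thesis .
qed

lemma nn_integral_lborel_cosh_inner_gaussian:
  fixes x :: "'a::euclidean_space"
  shows "(\<integral>\<^sup>+y. ennreal (cosh (y \<bullet> x) * gaussian y) \<partial>lborel) =
    ennreal (exp ((norm x)\<^sup>2 / 2) * sqrt (2 * pi) ^ DIM('a))"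
proof -
  have half: "ennreal (a * (1 / 2)) = ennreal a * ennreal (1 / 2)" for a :: real
    by (rule ennreal_mult'') simp
  have "ennreal (cosh (y \<bullet> x) * gaussian y) =
      ennreal (exp (y \<bullet> x) * gaussian y) * ennreal (1 / 2) +
      ennreal (exp (y \<bullet> - x) * gaussian y) * ennreal (1 / 2)" for y :: 'a
  proof -
    have "cosh (y \<bullet> x) * gaussian y = exp (y \<bullet> x) * gaussian y * (1 / 2) + exp (y \<bullet> - x) * gaussian y * (1 / 2)"
      by (simp add: cosh_def field_simps)
    also have "ennreal \<dots> = ennreal (exp (y \<bullet> x) * gaussian y * (1 / 2)) + ennreal (exp (y \<bullet> - x) * gaussian y * (1 / 2))"
      by (rule ennreal_plus) auto
    finally show ?thesis
      by (simp only: half)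
  qed
  then have "(\<integral>\<^sup>+y. ennreal (cosh (y \<bullet> x) * gaussian y) \<partial>lborel) =
      (\<integral>\<^sup>+y. ennreal (exp (y \<bullet> x) * gaussian y) \<partial>lborel) * ennreal (1 / 2) +
      (\<integral>\<^sup>+y. ennreal (exp (y \<bullet> - x) * gaussian y) \<partial>lborel) * ennreal (1 / 2)"
    by (simp add: nn_integral_add nn_integral_multc)
  also have "\<dots> = ennreal (exp ((norm x)\<^sup>2 / 2) * sqrt (2 * pi) ^ DIM('a) * (1 / 2)) +
      ennreal (exp ((norm x)\<^sup>2 / 2) * sqrt (2 * pi) ^ DIM('a) * (1 / 2))"
    by (simp only: nn_integral_lborel_exp_inner_gaussian norm_minus_cancel half)
  also have "\<dots> = ennreal (exp ((norm x)\<^sup>2 / 2) * sqrt (2 * pi) ^ DIM('a))"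
    by (simp flip: ennreal_plus)
  finally show ?thesis .
qed

lemma cosh_sums: "(\<lambda>m. x ^ (2 * m) / fact (2 * m)) sums cosh (x :: real)"
proof -
  have "(\<lambda>m. (\<lambda>n. if even n then x ^ n /\<^sub>R fact n else 0) (2 * m)) sums cosh x"
    by (subst sums_mono_reindex) (use cosh_converges[of x] in \<open>auto simp: strict_mono_def\<close>)
  then show ?thesis
    by (simp add: divide_inverse mult.commute)
qed

lemma nn_integral_cosh_suminf:
  fixes z q :: "'b \<Rightarrow> real"
  assumes [measurable]: "z \<in> borel_measurable N" "q \<in> borel_measurable N" and "\<And>x. 0 \<le> q x"
  shows "(\<integral>\<^sup>+x. ennreal (cosh (z x) * q x) \<partial>N) =
    (\<Sum>m. \<integral>\<^sup>+x. ennreal (z x ^ (2 * m) / fact (2 * m) * q x) \<partial>N)"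
proof -
  have "ennreal (cosh (z x) * q x) = (\<Sum>m. ennreal (z x ^ (2 * m) / fact (2 * m) * q x))" for x
    using assms(3) by (intro suminf_ennreal_eq[symmetric] sums_mult2 cosh_sums) (auto simp: zero_le_even_power)
  then show ?thesis
    by (simp add: nn_integral_suminf)
qed

lemma exp_sums_real: "(\<lambda>n. x ^ n / fact n) sums exp (x :: real)"
  using exp_converges[of x] by (simp add: divide_inverse mult.commute)

lemma sums_of_suminf_ennreal:
  assumes "(\<Sum>m. ennreal (f m)) = ennreal s" and "\<And>m. 0 \<le> f m" and "0 \<le> s"
  shows "f sums s"
  using summable_sums[OF summableI, of "\<lambda>m. ennreal (f m)"] assms by (simp add: sums_ennreal)

lemma powser_coeffs_unique:
  fixes a b :: "nat \<Rightarrow> real"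
  assumes "\<And>x. 0 \<le> x \<Longrightarrow> (\<lambda>m. a m * x ^ m) sums f x"
    and "\<And>x. 0 \<le> x \<Longrightarrow> (\<lambda>m. b m * x ^ m) sums f x"
  shows "a = b"
proof -
  define d where "d m = a m - b m" for m
  have d_sums: "(\<lambda>m. d m * x ^ m) sums 0" if "0 \<le> x" for x
    using sums_diff[OF assms[OF that]] by (simp add: d_def algebra_simps)
  have "d m = 0" for m
  proof (induction m rule: less_induct)
    case (less m)
    define g where "g x = (\<Sum>j. d (j + m) * x ^ j)" for x :: real
    have tail_sums: "(\<lambda>j. d (j + m) * x ^ j) sums 0" if "0 < x" for x
    proof -
      have "(\<lambda>j. d (j + m) * x ^ (j + m)) sums 0"
        using sums_split_initial_segment[OF d_sums[of x], of m] that less.IH by simp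
      then have "(\<lambda>j. d (j + m) * x ^ (j + m) / x ^ m) sums 0"
        using sums_divide by fastforce
      then show ?thesis
        using that by (simp add: power_add)
    qed
    have "summable (\<lambda>j. d (j + m) * 2 ^ j)"
      using tail_sums[of 2] by (simp add: sums_iff)
    then have "isCont g 0"
      unfolding g_def by (rule isCont_powser) simp
    then have "(g \<longlongrightarrow> g 0) (at_right 0)"
      by (simp add: isCont_def filterlim_at_split)
    moreover have "(g \<longlongrightarrow> 0) (at_right 0)"
      by (rule tendsto_eventually, rule eventually_at_rightI[of 0 1])
         (use tail_sums in \<open>auto simp: g_def sums_iff\<close>)
    ultimately have "g 0 = 0"
      using tendsto_unique by (metis trivial_limit_at_right_real)
    then show ?case
      by (simp add: g_def)
  qed
  then show ?thesis
    by (simp add: d_def fun_eq_iff)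
qed

lemma sums_Cauchy_Schwarz:
  fixes a b q :: "nat \<Rightarrow> real"
  assumes "a sums A" "b sums B" "q sums Q"
    and "\<And>m. 0 \<le> a m" "\<And>m. 0 \<le> b m" "\<And>m. 0 \<le> q m" "\<And>m. (q m)\<^sup>2 \<le> a m * b m"
  shows "Q\<^sup>2 \<le> A * B"
proof -
  have "(\<Sum>m<N. q m)\<^sup>2 \<le> A * B" for N
  proof -
    have "q m \<le> sqrt (a m) * sqrt (b m)" for m
      using assms(7)[of m] by (simp add: real_le_rsqrt flip: real_sqrt_mult)
    then have "(\<Sum>m<N. q m)\<^sup>2 \<le> (\<Sum>m<N. sqrt (a m) * sqrt (b m))\<^sup>2"
      using assms(6) by (intro power_mono sum_mono sum_nonneg) auto
    also have "\<dots> \<le> (\<Sum>m<N. (sqrt (a m))\<^sup>2) * (\<Sum>m<N. (sqrt (b m))\<^sup>2)"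
      by (rule Cauchy_Schwarz_ineq_sum)
    also have "\<dots> = (\<Sum>m<N. a m) * (\<Sum>m<N. b m)"
      using assms(4,5) by simp
    also have "\<dots> \<le> A * B"
      using assms(1,2,4,5)
      by (intro mult_mono sum_nonneg) (auto simp: sums_iff intro!: sum_le_suminf suminf_nonneg)
    finally show ?thesis .
  qed
  moreover have "(\<lambda>N. (\<Sum>m<N. q m)\<^sup>2) \<longlonglongrightarrow> Q\<^sup>2"
    using assms(3) by (intro tendsto_power) (simp add: sums_def)
  ultimately show ?thesis
    by (intro LIMSEQ_le_const2[where X="\<lambda>N. (\<Sum>m<N. q m)\<^sup>2"]) auto
qed

section \<open>Moments\<close>

lemma nn_integral_lborel_inner_power_gaussian_suminf:
  fixes x :: "'a::euclidean_space"
  shows "(\<Sum>m. ennreal (t ^ (2 * m) / fact (2 * m)) * (\<integral>\<^sup>+y. ennreal ((y \<bullet> x) ^ (2 * m) * gaussian y) \<partial>lborel)) =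
    ennreal (sqrt (2 * pi) ^ DIM('a) * exp (t\<^sup>2 * (norm x)\<^sup>2 / 2))"
proof -
  have coeff_split: "ennreal ((y \<bullet> (t *\<^sub>R x)) ^ (2 * m) / fact (2 * m) * gaussian y) =
      ennreal (t ^ (2 * m) / fact (2 * m)) * ennreal ((y \<bullet> x) ^ (2 * m) * gaussian y)" for y m
  proof -
    have "(y \<bullet> (t *\<^sub>R x)) ^ (2 * m) / fact (2 * m) * gaussian y =
        t ^ (2 * m) / fact (2 * m) * ((y \<bullet> x) ^ (2 * m) * gaussian y)"
      by (simp add: power_mult_distrib)
    moreover have "0 \<le> t ^ (2 * m) / fact (2 * m)"
      by (simp add: zero_le_even_power)
    ultimately show ?thesis
      by (simp only: ennreal_mult')
  qed
  have "ennreal (sqrt (2 * pi) ^ DIM('a) * exp (t\<^sup>2 * (norm x)\<^sup>2 / 2)) =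
      (\<integral>\<^sup>+y. ennreal (cosh (y \<bullet> (t *\<^sub>R x)) * gaussian y) \<partial>lborel)"
    by (simp only: nn_integral_lborel_cosh_inner_gaussian) (simp add: power_mult_distrib mult.commute)
  also have "\<dots> = (\<Sum>m. \<integral>\<^sup>+y. ennreal ((y \<bullet> (t *\<^sub>R x)) ^ (2 * m) / fact (2 * m) * gaussian y) \<partial>lborel)"
    by (rule nn_integral_cosh_suminf) auto
  also have "\<dots> = (\<Sum>m. ennreal (t ^ (2 * m) / fact (2 * m)) *
      (\<integral>\<^sup>+y. ennreal ((y \<bullet> x) ^ (2 * m) * gaussian y) \<partial>lborel))"
    by (simp only: coeff_split) (simp add: nn_integral_cmult)
  finally show ?thesis ..
qed

lemma nn_integral_lborel_inner_power_gaussian_finite: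
  fixes x :: "'a::euclidean_space"
  shows "(\<integral>\<^sup>+y. ennreal ((y \<bullet> x) ^ (2 * m) * gaussian y) \<partial>lborel) < \<infinity>"
proof -
  have "(\<Sum>m. ennreal (1 ^ (2 * m) / fact (2 * m)) * (\<integral>\<^sup>+y. ennreal ((y \<bullet> x) ^ (2 * m) * gaussian y) \<partial>lborel)) < \<infinity>"
    unfolding nn_integral_lborel_inner_power_gaussian_suminf by simp
  then have "ennreal (1 ^ (2 * m) / fact (2 * m)) * (\<integral>\<^sup>+y. ennreal ((y \<bullet> x) ^ (2 * m) * gaussian y) \<partial>lborel) < \<infinity>"
    by (rule ennreal_suminf_lessD)
  then show ?thesis
    by (auto simp: ennreal_mult_less_top)
qed

text \<open>For every s \<ge> 0 both \<Sum>_m G_m s^m / (2m)! and \<Sum>_m c (|x|^2/2)^m s^m / m! equal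
  c exp (s |x|^2 / 2), where G_m is the moment being computed; comparing coefficients gives G_m.\<close>

lemma nn_integral_lborel_inner_power_gaussian:
  fixes x :: "'a::euclidean_space"
  shows "(\<integral>\<^sup>+y. ennreal ((y \<bullet> x) ^ (2 * m) * gaussian y) \<partial>lborel) =
    ennreal (sqrt (2 * pi) ^ DIM('a) * (norm x) ^ (2 * m) * fact (2 * m) / (2 ^ m * fact m))"
proof -
  define c where "c = sqrt (2 * pi) ^ DIM('a)"
  define G where "G m = (\<integral>\<^sup>+y. ennreal ((y \<bullet> x) ^ (2 * m) * gaussian y) \<partial>lborel)" for m
  define g where "g m = enn2real (G m)" for m
  have G_eq: "G m = ennreal (g m)" and g_nonneg: "0 \<le> g m" for m
    using nn_integral_lborel_inner_power_gaussian_finite[of x m] by (simp_all add: g_def G_def)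
  have "(\<lambda>m. g m / fact (2 * m) * s ^ m) sums (c * exp (s * (norm x)\<^sup>2 / 2))" if "0 \<le> s" for s
  proof (rule sums_of_suminf_ennreal)
    have "ennreal (sqrt s ^ (2 * m) / fact (2 * m)) * G m = ennreal (g m / fact (2 * m) * s ^ m)" for m
    proof -
      have "ennreal (sqrt s ^ (2 * m) / fact (2 * m)) * G m = ennreal (s ^ m / fact (2 * m)) * ennreal (g m)"
        using that by (simp only: G_eq power_mult real_sqrt_pow2)
      also have "\<dots> = ennreal (s ^ m / fact (2 * m) * g m)"
        using that by (intro ennreal_mult'[symmetric]) simp
      finally show ?thesis
        by (simp add: mult.commute)
    qed
    then have "(\<Sum>m. ennreal (g m / fact (2 * m) * s ^ m)) = (\<Sum>m. ennreal (sqrt s ^ (2 * m) / fact (2 * m)) * G m)"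
      by simp
    also have "\<dots> = ennreal (c * exp (s * (norm x)\<^sup>2 / 2))"
      using that unfolding G_def c_def by (simp only: nn_integral_lborel_inner_power_gaussian_suminf real_sqrt_pow2)
    finally show "(\<Sum>m. ennreal (g m / fact (2 * m) * s ^ m)) = ennreal (c * exp (s * (norm x)\<^sup>2 / 2))" .
  next
    show "0 \<le> g m / fact (2 * m) * s ^ m" for m
      using that g_nonneg[of m] by simp
  qed (simp add: c_def)
  moreover have "(\<lambda>m. c * ((norm x)\<^sup>2 / 2) ^ m / fact m * s ^ m) sums (c * exp (s * ((norm x)\<^sup>2 / 2)))" for s
  proof -
    have "c * ((s * ((norm x)\<^sup>2 / 2)) ^ m / fact m) = c * ((norm x)\<^sup>2 / 2) ^ m / fact m * s ^ m" for m
      unfolding power_mult_distrib by (simp add: field_simps)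
    then show ?thesis
      using sums_mult[OF exp_sums_real[of "s * ((norm x)\<^sup>2 / 2)"], of c] by (simp only:)
  qed
  ultimately have "(\<lambda>m. g m / fact (2 * m)) = (\<lambda>m. c * ((norm x)\<^sup>2 / 2) ^ m / fact m)"
    by (intro powser_coeffs_unique) simp_all
  then have "g m = c * (norm x) ^ (2 * m) * fact (2 * m) / (2 ^ m * fact m)"
    unfolding fun_eq_iff power_mult by (simp add: power_divide field_simps)
  then show ?thesis
    by (simp add: G_def[symmetric] G_eq c_def)
qed

lemma integrable_sphere_uniform_bounded:
  fixes f :: "'a::euclidean_space \<Rightarrow> real"
  assumes [measurable]: "f \<in> borel_measurable borel" and "\<And>l. norm l \<le> 1 \<Longrightarrow> \<bar>f l\<bar> \<le> B"
  shows "integrable sphere_uniform f"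
proof -
  interpret prob_space "sphere_uniform :: 'a measure"
    by (rule prob_space_sphere_uniform)
  show ?thesis
    using AE_sphere_uniform_norm_le by (intro integrable_const_bound[where B=B]) (auto simp: assms(2))
qed

lemma abs_inner_le_norm_of_norm_le_1: "norm l \<le> 1 \<Longrightarrow> \<bar>l \<bullet> x\<bar> \<le> norm x"
  using Cauchy_Schwarz_ineq2[of l x] mult_left_le_one_le[of "norm x" "norm l"] by simp

lemma integrable_sphere_uniform_exp_inner:
  "integrable sphere_uniform (\<lambda>l. exp (l \<bullet> x))"
  by (rule integrable_sphere_uniform_bounded[where B="exp (norm x)"])
     (use abs_inner_le_norm_of_norm_le_1[of _ x] in \<open>auto simp: abs_le_iff\<close>)

lemma integrable_sphere_uniform_inner_power:
  "integrable sphere_uniform (\<lambda>l. (l \<bullet> x) ^ k)"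
  by (rule integrable_sphere_uniform_bounded[where B="norm x ^ k"])
     (auto simp: power_abs intro: power_mono dest: abs_inner_le_norm_of_norm_le_1)

lemma Phi_eq_integral_cosh: "Phi x = (\<integral>l. cosh (l \<bullet> x) \<partial>sphere_uniform)"
proof -
  have "(\<integral>l. exp (l \<bullet> - x) \<partial>sphere_uniform) = (\<integral>l. exp (l \<bullet> x) \<partial>distr sphere_uniform borel uminus)"
    by (simp add: integral_distr)
  then have "(\<integral>l. exp (l \<bullet> - x) \<partial>sphere_uniform) = Phi x"
    by (simp add: distr_uminus_sphere_uniform Phi_def)
  moreover have "(\<lambda>l. cosh (l \<bullet> x)) = (\<lambda>l. (exp (l \<bullet> x) + exp (l \<bullet> - x)) / 2)"
    by (simp add: cosh_def fun_eq_iff)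
  ultimately show ?thesis
    using integrable_sphere_uniform_exp_inner[of x] integrable_sphere_uniform_exp_inner[of "- x"]
    by (simp add: Phi_def)
qed

lemma Phi_sums: "(\<lambda>m. (\<integral>l. (l \<bullet> x) ^ (2 * m) \<partial>sphere_uniform) / fact (2 * m)) sums Phi x"
proof (rule sums_of_suminf_ennreal)
  have "integrable sphere_uniform (\<lambda>l. cosh (l \<bullet> x))"
    using integrable_sphere_uniform_exp_inner[of x] integrable_sphere_uniform_exp_inner[of "- x"]
    by (simp add: cosh_def)
  then have "ennreal (Phi x) = (\<integral>\<^sup>+l. ennreal (cosh (l \<bullet> x) * 1) \<partial>sphere_uniform)"
    by (simp add: Phi_eq_integral_cosh nn_integral_eq_integral)
  also have "\<dots> = (\<Sum>m. \<integral>\<^sup>+l. ennreal ((l \<bullet> x) ^ (2 * m) / fact (2 * m) * 1) \<partial>sphere_uniform)"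
    by (rule nn_integral_cosh_suminf) auto
  also have "\<dots> = (\<Sum>m. ennreal ((\<integral>l. (l \<bullet> x) ^ (2 * m) \<partial>sphere_uniform) / fact (2 * m)))"
    using integrable_sphere_uniform_inner_power[of x]
    by (simp add: nn_integral_eq_integral zero_le_even_power)
  finally show "(\<Sum>m. ennreal ((\<integral>l. (l \<bullet> x) ^ (2 * m) \<partial>sphere_uniform) / fact (2 * m))) = ennreal (Phi x)" ..
qed (auto simp: zero_le_even_power Phi_eq_integral_cosh intro: integral_nonneg_AE)

lemma nn_integral_lborel_norm_power_gaussian_suminf:
  assumes "0 \<le> a" "a < 1"
  shows "(\<Sum>m. \<integral>\<^sup>+y. ennreal ((a / 2) ^ m / fact m * (norm y ^ (2 * m) * gaussian y))
      \<partial>(lborel :: 'a::euclidean_space measure)) = ennreal ((sqrt (2 * pi) / sqrt (1 - a)) ^ DIM('a))"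
proof -
  have "(\<lambda>m. (a / 2) ^ m / fact m * (norm y ^ (2 * m) * gaussian y)) sums gaussian (sqrt (1 - a) *\<^sub>R y)"
    for y :: 'a
  proof -
    have "(\<lambda>m. (a * (norm y)\<^sup>2 / 2) ^ m / fact m * gaussian y) =
        (\<lambda>m. (a / 2) ^ m / fact m * (norm y ^ (2 * m) * gaussian y))"
      unfolding power_mult power_mult_distrib by (simp add: field_simps)
    moreover have "exp (a * (norm y)\<^sup>2 / 2) * gaussian y = gaussian (sqrt (1 - a) *\<^sub>R y)"
      using assms by (simp add: gaussian_def power_mult_distrib algebra_simps flip: exp_add)
    ultimately show ?thesis
      using sums_mult2[OF exp_sums_real[of "a * (norm y)\<^sup>2 / 2"], of "gaussian y"] by simp
  qed
  then have "(\<Sum>m. ennreal ((a / 2) ^ m / fact m * (norm y ^ (2 * m) * gaussian y))) =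
      ennreal (gaussian (sqrt (1 - a) *\<^sub>R y))" for y :: 'a
    using assms by (intro suminf_ennreal_eq) (auto simp: zero_le_even_power)
  then have "(\<Sum>m. \<integral>\<^sup>+y. ennreal ((a / 2) ^ m / fact m * (norm y ^ (2 * m) * gaussian y)) \<partial>(lborel :: 'a measure)) =
      (\<integral>\<^sup>+y. gaussian (sqrt (1 - a) *\<^sub>R y) \<partial>(lborel :: 'a measure))"
    by (simp add: nn_integral_suminf[symmetric])
  also have "\<dots> = ennreal ((sqrt (2 * pi) / sqrt (1 - a)) ^ DIM('a))"
    using assms by (intro nn_integral_lborel_gaussian_scaled) simp
  finally show ?thesis .
qed

lemma nn_integral_lborel_norm_power_gaussian_finite:
  "(\<integral>\<^sup>+y. ennreal (norm y ^ (2 * m) * gaussian y) \<partial>(lborel :: 'a::euclidean_space measure)) < \<infinity>"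
proof -
  let ?c = "(1 / 2 / 2) ^ m / fact m :: real"
  have "(\<Sum>m. \<integral>\<^sup>+y. ennreal ((1 / 2 / 2) ^ m / fact m * (norm y ^ (2 * m) * gaussian y))
      \<partial>(lborel :: 'a measure)) < \<infinity>"
    by (subst nn_integral_lborel_norm_power_gaussian_suminf) simp_all
  then have "(\<integral>\<^sup>+y. ennreal (?c * (norm y ^ (2 * m) * gaussian y)) \<partial>(lborel :: 'a measure)) < \<infinity>"
    by (rule ennreal_suminf_lessD)
  also have "(\<integral>\<^sup>+y. ennreal (?c * (norm y ^ (2 * m) * gaussian y)) \<partial>(lborel :: 'a measure)) =
      (\<integral>\<^sup>+y. ennreal ?c * ennreal (norm y ^ (2 * m) * gaussian y) \<partial>(lborel :: 'a measure))"
    by (intro nn_integral_cong ennreal_mult') simp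
  also have "\<dots> = ennreal ?c * (\<integral>\<^sup>+y. ennreal (norm y ^ (2 * m) * gaussian y) \<partial>(lborel :: 'a measure))"
    by (rule nn_integral_cmult) simp
  finally show ?thesis
    by (auto simp: ennreal_mult_less_top)
qed

lemma integrable_lborel_norm_power_gaussian:
  "integrable lborel (\<lambda>y::'a::euclidean_space. norm y ^ (2 * m) * gaussian y)"
proof (rule integrableI_nonneg)
  show "(\<integral>\<^sup>+y. ennreal (norm y ^ (2 * m) * gaussian y) \<partial>(lborel :: 'a measure)) < \<infinity>"
    by (rule nn_integral_lborel_norm_power_gaussian_finite)
qed auto

lemma norm_power_gaussian_moments_sums:
  assumes "0 \<le> a" "a < 1"
  shows "(\<lambda>m. (a / 2) ^ m / fact m * (\<integral>y. norm y ^ (2 * m) * gaussian y \<partial>(lborel :: 'a::euclidean_space measure)))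
    sums ((sqrt (2 * pi) / sqrt (1 - a)) ^ DIM('a))"
proof (rule sums_of_suminf_ennreal)
  have "ennreal ((a / 2) ^ m / fact m * (\<integral>y. norm y ^ (2 * m) * gaussian y \<partial>(lborel :: 'a measure))) =
      (\<integral>\<^sup>+y. ennreal ((a / 2) ^ m / fact m * (norm y ^ (2 * m) * gaussian y)) \<partial>(lborel :: 'a measure))" for m
  proof -
    have "(a / 2) ^ m / fact m * (\<integral>y. norm y ^ (2 * m) * gaussian y \<partial>(lborel :: 'a measure)) =
        (\<integral>y. (a / 2) ^ m / fact m * (norm y ^ (2 * m) * gaussian y) \<partial>(lborel :: 'a measure))"
      by simp
    also have "ennreal \<dots> =
        (\<integral>\<^sup>+y. ennreal ((a / 2) ^ m / fact m * (norm y ^ (2 * m) * gaussian y)) \<partial>(lborel :: 'a measure))"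
      using assms integrable_lborel_norm_power_gaussian[of m, where 'a='a]
      by (intro nn_integral_eq_integral[symmetric]) (auto simp: zero_le_even_power)
    finally show ?thesis .
  qed
  then show "(\<Sum>m. ennreal ((a / 2) ^ m / fact m * (\<integral>y. norm y ^ (2 * m) * gaussian y \<partial>(lborel :: 'a measure)))) =
      ennreal ((sqrt (2 * pi) / sqrt (1 - a)) ^ DIM('a))"
    by (simp only: nn_integral_lborel_norm_power_gaussian_suminf[OF assms])
qed (use assms in \<open>auto simp: zero_le_even_power intro!: integral_nonneg_AE\<close>)

lemma sphere_moment_mult_gaussian_moment:
  fixes x :: "'a::euclidean_space"
  shows "(\<integral>l. (l \<bullet> x) ^ (2 * m) \<partial>sphere_uniform) * (\<integral>y. norm y ^ (2 * m) * gaussian y \<partial>(lborel :: 'a measure)) =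
    sqrt (2 * pi) ^ DIM('a) * norm x ^ (2 * m) * fact (2 * m) / (2 ^ m * fact m)"
proof -
  define S where "S = (\<integral>l. (l \<bullet> x) ^ (2 * m) \<partial>sphere_uniform)"
  define P where "P = (\<integral>y. norm y ^ (2 * m) * gaussian y \<partial>(lborel :: 'a measure))"
  have S: "(\<integral>\<^sup>+l. ennreal ((l \<bullet> x) ^ (2 * m)) \<partial>sphere_uniform) = ennreal S"
    unfolding S_def using integrable_sphere_uniform_inner_power[of x "2 * m"]
    by (intro nn_integral_eq_integral) (auto simp: zero_le_even_power)
  have P: "(\<integral>\<^sup>+y. ennreal (norm y ^ (2 * m) * gaussian y) \<partial>(lborel :: 'a measure)) = ennreal P"
    unfolding P_def using integrable_lborel_norm_power_gaussian[of m, where 'a='a]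
    by (intro nn_integral_eq_integral) auto
  have "ennreal (sqrt (2 * pi) ^ DIM('a) * norm x ^ (2 * m) * fact (2 * m) / (2 ^ m * fact m)) =
      (\<integral>\<^sup>+y. ennreal ((y \<bullet> x) ^ (2 * m) * gaussian y) \<partial>lborel)"
    by (rule nn_integral_lborel_inner_power_gaussian[symmetric])
  also have "\<dots> = (\<integral>\<^sup>+y. ennreal ((sgn y \<bullet> x) ^ (2 * m)) * ennreal (norm y ^ (2 * m) * gaussian (norm y))
      \<partial>(lborel :: 'a measure))"
  proof (intro nn_integral_cong)
    fix y :: 'a
    have "(sgn y \<bullet> x) * norm y = y \<bullet> x"
      by (cases "y = 0") (simp_all add: sgn_div_norm)
    then have "(y \<bullet> x) ^ (2 * m) * gaussian y = (sgn y \<bullet> x) ^ (2 * m) * (norm y ^ (2 * m) * gaussian y)"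
      by (metis mult.assoc power_mult_distrib)
    then show "ennreal ((y \<bullet> x) ^ (2 * m) * gaussian y) =
        ennreal ((sgn y \<bullet> x) ^ (2 * m)) * ennreal (norm y ^ (2 * m) * gaussian (norm y))"
      unfolding gaussian_norm by (simp only:) (rule ennreal_mult', simp add: zero_le_even_power)
  qed
  also have "\<dots> = (\<integral>\<^sup>+l. ennreal ((l \<bullet> x) ^ (2 * m)) \<partial>sphere_uniform) *
      (\<integral>\<^sup>+y. ennreal (norm y ^ (2 * m) * gaussian (norm y)) \<partial>(lborel :: 'a measure))"
    using S by (intro nn_integral_polar_product[where k="\<lambda>r. ennreal (r ^ (2 * m) * gaussian r)"]) auto
  also have "\<dots> = ennreal (S * P)"
    using S P by (simp add: ennreal_mult' S_def integral_nonneg_AE zero_le_even_power)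
  finally show ?thesis
    by (simp add: S_def P_def zero_le_even_power integral_nonneg_AE)
qed

lemma moment_terms_mult_eq_square:
  fixes v :: "'a::euclidean_space"
  shows "(\<integral>l. (l \<bullet> v) ^ (2 * m) \<partial>sphere_uniform) / fact (2 * m) *
      ((\<epsilon>\<^sup>2 / 2) ^ m / fact m * (\<integral>y. norm y ^ (2 * m) * gaussian y \<partial>(lborel :: 'a measure))) =
    sqrt (2 * pi) ^ DIM('a) * ((\<epsilon> * norm v / 2) ^ m / fact m)\<^sup>2"
proof -
  have square: "norm v ^ (2 * m) * (\<epsilon>\<^sup>2 / 2) ^ m / 2 ^ m = ((\<epsilon> * norm v / 2) ^ m)\<^sup>2"
  proof -
    have "norm v ^ (2 * m) * (\<epsilon>\<^sup>2 / 2) ^ m / 2 ^ m = ((norm v)\<^sup>2 * (\<epsilon>\<^sup>2 / 2) / 2) ^ m"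
      by (simp add: power_mult power_divide flip: power_mult_distrib)
    also have "(norm v)\<^sup>2 * (\<epsilon>\<^sup>2 / 2) / 2 = (\<epsilon> * norm v / 2)\<^sup>2"
      by (simp add: power2_eq_square)
    finally show ?thesis
      by (simp add: power_mult[symmetric] mult.commute)
  qed
  have "(\<integral>l. (l \<bullet> v) ^ (2 * m) \<partial>sphere_uniform) / fact (2 * m) *
      ((\<epsilon>\<^sup>2 / 2) ^ m / fact m * (\<integral>y. norm y ^ (2 * m) * gaussian y \<partial>(lborel :: 'a measure))) =
      ((\<integral>l. (l \<bullet> v) ^ (2 * m) \<partial>sphere_uniform) * (\<integral>y. norm y ^ (2 * m) * gaussian y \<partial>(lborel :: 'a measure))) *
      (\<epsilon>\<^sup>2 / 2) ^ m / (fact (2 * m) * fact m)"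
    by (simp only: times_divide_eq_left times_divide_eq_right divide_divide_eq_left ac_simps)
  also have "\<dots> = sqrt (2 * pi) ^ DIM('a) * (norm v ^ (2 * m) * (\<epsilon>\<^sup>2 / 2) ^ m / 2 ^ m) / (fact m)\<^sup>2"
    unfolding sphere_moment_mult_gaussian_moment by (simp add: power2_eq_square)
  also have "\<dots> = sqrt (2 * pi) ^ DIM('a) * ((\<epsilon> * norm v / 2) ^ m / fact m)\<^sup>2"
    unfolding square by (simp add: power_divide power_mult_distrib)
  finally show ?thesis .
qed

lemma Phi_lower_bound:
  fixes v :: "'a::euclidean_space"
  assumes "0 < \<epsilon>" "\<epsilon> < 1"
  shows "(1 - \<epsilon>\<^sup>2) powr (real DIM('a) / 2) * exp (\<epsilon> * norm v) \<le> Phi v"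
proof -
  define c where "c = sqrt (2 * pi) ^ DIM('a)"
  define S where "S m = (\<integral>l. (l \<bullet> v) ^ (2 * m) \<partial>sphere_uniform)" for m
  define P where "P m = (\<integral>y. norm y ^ (2 * m) * gaussian y \<partial>(lborel :: 'a measure))" for m
  define q where "q m = sqrt c * ((\<epsilon> * norm v / 2) ^ m / fact m)" for m
  have eps2: "0 \<le> \<epsilon>\<^sup>2" "\<epsilon>\<^sup>2 < 1"
    using assms by (auto simp: power_less_one_iff abs_less_iff)
  have "(sqrt c * exp (\<epsilon> * norm v / 2))\<^sup>2 \<le> Phi v * (sqrt (2 * pi) / sqrt (1 - \<epsilon>\<^sup>2)) ^ DIM('a)"
  proof (rule sums_Cauchy_Schwarz)
    show "(\<lambda>m. S m / fact (2 * m)) sums Phi v"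
      unfolding S_def by (rule Phi_sums)
    show "(\<lambda>m. (\<epsilon>\<^sup>2 / 2) ^ m / fact m * P m) sums ((sqrt (2 * pi) / sqrt (1 - \<epsilon>\<^sup>2)) ^ DIM('a))"
      unfolding P_def using eps2 by (rule norm_power_gaussian_moments_sums)
    show "q sums (sqrt c * exp (\<epsilon> * norm v / 2))"
      unfolding q_def by (rule sums_mult[OF exp_sums_real])
    show "(q m)\<^sup>2 \<le> S m / fact (2 * m) * ((\<epsilon>\<^sup>2 / 2) ^ m / fact m * P m)" for m
      unfolding S_def P_def moment_terms_mult_eq_square q_def power_mult_distrib c_def by simp
    show "0 \<le> q m" for m
      using assms by (simp add: q_def c_def)
  qed (auto simp: S_def P_def zero_le_even_power intro!: integral_nonneg_AE)
  then have "c * exp (\<epsilon> * norm v) \<le> c * (Phi v / sqrt (1 - \<epsilon>\<^sup>2) ^ DIM('a))"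
    by (simp add: c_def power_mult_distrib power2_eq_square[of "exp _"] power_divide mult.commute flip: exp_add)
  then have "sqrt (1 - \<epsilon>\<^sup>2) ^ DIM('a) * exp (\<epsilon> * norm v) \<le> Phi v"
    using eps2 by (simp add: c_def field_simps)
  moreover have "(1 - \<epsilon>\<^sup>2) powr (real DIM('a) / 2) = sqrt (1 - \<epsilon>\<^sup>2) ^ DIM('a)"
    using eps2 by (simp add: powr_half_sqrt[symmetric] powr_realpow[symmetric] powr_powr)
  ultimately show ?thesis
    by simp
qed

theorem lemma1:
  fixes X :: "real ^ 'n" and lam \<epsilon> :: real
  assumes "0 < \<epsilon>" and "\<epsilon> < 1"
  shows "Phi (lam *\<^sub>R X) \<ge> (1 - \<epsilon>\<^sup>2) powr (real CARD('n) / 2) * exp (\<epsilon> * norm (lam *\<^sub>R X))"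
  using Phi_lower_bound[OF assms, of "lam *\<^sub>R X"] by simp

end
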